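(* Let $b_0:[t_0,T]\to\mathbb{R}$ and $b=(b_1,b_2,b_3):[t_0,T]\to\mathbb{R}^3$ be continuous and $H(t)=b_0(t)\mathbb{I}+b(t)\cdot\sigma$. Let $q(t)=(u_0(t),\tilde u_1(t),\tilde u_2(t),\tilde u_3(t))$ be the solution of the linear Cauchy problem $\dot q'(t)=A(t)q'(t)$, $q(t_0)=(1,0,0,0)$, where $q'$ is the column vector of $q$ and $$A(t)=\begin{pmatrix}0&b_1&b_2&b_3\\-b_1&0&-b_3&b_2\\-b_2&b_3&0&-b_1\\-b_3&-b_2&b_1&0\end{pmatrix}(t),$$ equivalently $\dot u_0=b\cdot\tilde u$, $\dot{\tilde u}=-u_0 b+b\times\tilde u$. Then $q(t)$ is real with $u_0(t)^2+\|\tilde u(t)\|^2=1$ for all $t$, and $$U_H(t,t_0)=\exp\Bigl\{-i\int_{t_0}^tb_0(\tau)d\tau\Bigr\}\bigl(u_0(t)\,\mathbb{I}+i\,\tilde u(t)\cdot\sigma\bigr),\qquad t\in[t_0,T].$$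
   Context: $\sigma=(\sigma_1,\sigma_2,\sigma_3)$ are the Pauli matrices $\sigma_1=\begin{pmatrix}0&1\\1&0\end{pmatrix}$, $\sigma_2=\begin{pmatrix}0&-i\\i&0\end{pmatrix}$, $\sigma_3=\begin{pmatrix}1&0\\0&-1\end{pmatrix}$; $v\cdot\sigma=\sum_jv_j\sigma_j$; $\times$ is the vector product on $\mathbb{R}^3$. $U_H(t,t_0)$ is the solution of $i\frac{d}{dt}U_H(t,t_0)=H(t)U_H(t,t_0)$, $U_H(t_0,t_0)=\mathbb{I}$ on $\mathbb{C}^2$. *)

theory Defs
  imports "HOL-Analysis.Analysis"
begin

definition mat2 :: "complex \<Rightarrow> complex \<Rightarrow> complex \<Rightarrow> complex \<Rightarrow> complex^2^2" where
  "mat2 a b c d = (\<chi> i j. if i = 1 then (if j = 1 then a else b) else (if j = 1 then c else d))"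

definition sigma1 :: "complex^2^2" where "sigma1 = mat2 0 1 1 0"
definition sigma2 :: "complex^2^2" where "sigma2 = mat2 0 (-\<i>) \<i> 0"
definition sigma3 :: "complex^2^2" where "sigma3 = mat2 1 0 0 (-1)"

definition dot_sigma :: "real \<Rightarrow> real \<Rightarrow> real \<Rightarrow> complex^2^2" where
  "dot_sigma v1 v2 v3 = v1 *\<^sub>R sigma1 + v2 *\<^sub>R sigma2 + v3 *\<^sub>R sigma3"

definition ham :: "(real \<Rightarrow> real) \<Rightarrow> (real \<Rightarrow> real) \<Rightarrow> (real \<Rightarrow> real) \<Rightarrow> (real \<Rightarrow> real)
    \<Rightarrow> real \<Rightarrow> complex^2^2" where
  "ham b0 b1 b2 b3 t = b0 t *\<^sub>R mat 1 + dot_sigma (b1 t) (b2 t) (b3 t)"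

end

theory Submission
  imports Defs
begin

text \<open>
  The matrices \<open>u0 I + i u\<cdot>\<sigma>\<close> multiply like quaternions, and the linear system for
  \<open>q = (u0, u)\<close> says precisely that \<open>Q = u0 I + i u\<cdot>\<sigma>\<close> solves \<open>Q' = -i (b\<cdot>\<sigma>) Q\<close>, while the
  quaternion conjugate \<open>Q*\<close> solves the adjoint equation \<open>Q*' = Q* i (b\<cdot>\<sigma>)\<close>. Hence
  \<open>Q* Q = |q|^2 I\<close> is constant, which gives \<open>|q| = 1\<close>. Likewise, with \<open>\<theta> = \<integral> b0\<close>, the matrix
  \<open>exp(i\<theta>) Q*\<close> solves the adjoint of the Schroedinger equation, so \<open>exp(i\<theta>) Q* U\<close> keeps its
  initial value \<open>I\<close>; multiplying by its inverse \<open>exp(-i\<theta>) Q\<close> gives \<open>U = exp(-i\<theta>) Q\<close>.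
  No uniqueness theorem for linear ODEs is needed.
\<close>

lemma bounded_bilinear_matrix_matrix_mult:
  "bounded_bilinear ((**) :: 'a::{real_algebra_1,euclidean_space}^'n^'m \<Rightarrow> 'a^'p^'n \<Rightarrow> 'a^'p^'m)"
  unfolding bilinear_conv_bounded_bilinear[symmetric] bilinear_def
  by (auto intro!: linearI simp: matrix_add_ldistrib scalar_matrix_assoc matrix_scalar_ac
      matrix_matrix_mult_def vec_eq_iff sum.distrib distrib_left distrib_right scaleR_sum_right)

lemma bounded_linear_mat: "bounded_linear (mat :: 'a::{real_algebra_1,euclidean_space} \<Rightarrow> 'a^'n^'n)"
  unfolding linear_conv_bounded_linear[symmetric]
  by (auto intro!: linearI simp: mat_def vec_eq_iff)

lemma matrix_mult_minus_left: "- A ** B = - (A ** B :: 'a::ring_1^'n^'m)"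
  by (simp add: matrix_matrix_mult_def vec_eq_iff sum_negf)

lemma matrix_mult_minus_right: "A ** - B = - (A ** B :: 'a::ring_1^'n^'m)"
  by (simp add: matrix_matrix_mult_def vec_eq_iff sum_negf)

lemma mat_mult_left: "(mat c ** A) $ i $ j = c * A $ i $ j"
proof -
  have "\<And>k. (if i = k then c else 0) * A $ k $ j = (if k = i then c * A $ k $ j else 0)"
    by simp
  then show ?thesis
    unfolding matrix_matrix_mult_def mat_def vec_lambda_beta by (simp only:) simp
qed

lemma mat_mult_right: "(A ** mat c) $ i $ j = A $ i $ j * c"
  unfolding matrix_matrix_mult_def mat_def by (simp add: if_distrib sum.delta' cong: if_cong)

lemma mat_mult_mat: "mat a ** mat b = (mat (a * b) :: 'a::semiring_1^'n^'n)"
  by (simp add: vec_eq_iff mat_mult_left) (simp add: mat_def)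

lemma mat_mult_commute: "mat c ** A = A ** (mat c :: 'a::comm_semiring_1^'n^'n)"
  by (simp add: vec_eq_iff mat_mult_left mat_mult_right mult.commute)

lemma matrix_mult_constant_on:
  fixes P U A :: "real \<Rightarrow> 'a::{real_algebra_1,euclidean_space}^'n^'n"
  assumes "convex S"
    and U: "\<And>t. t \<in> S \<Longrightarrow> (U has_vector_derivative A t ** U t) (at t within S)"
    and P: "\<And>t. t \<in> S \<Longrightarrow> (P has_vector_derivative - (P t ** A t)) (at t within S)"
    and "s \<in> S" "t \<in> S"
  shows "P t ** U t = P s ** U s"
proof -
  have "((\<lambda>t. P t ** U t) has_vector_derivative 0) (at t within S)" if "t \<in> S" for t
    using bounded_bilinear.has_vector_derivative[OF bounded_bilinear_matrix_matrix_mult P[OF that] U[OF that]]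
    by (simp add: matrix_mul_assoc matrix_mult_minus_left)
  then obtain c where "\<And>t. t \<in> S \<Longrightarrow> P t ** U t = c"
    using has_vector_derivative_zero_constant[OF \<open>convex S\<close>] by blast
  then show ?thesis using assms(4,5) by simp
qed

lemma has_vector_derivative_cis:
  assumes "(\<theta> has_real_derivative d) (at t within S)"
  shows "((\<lambda>t. cis (\<theta> t)) has_vector_derivative \<i> * of_real d * cis (\<theta> t)) (at t within S)"
  unfolding cis.ctr Complex_eq
  by (rule derivative_eq_intros assms refl)+ (simp add: algebra_simps)

lemma mat2_eq_iff: "mat2 a b c d = mat2 a' b' c' d' \<longleftrightarrow> a = a' \<and> b = b' \<and> c = c' \<and> d = d'"
  by (auto simp: mat2_def vec_eq_iff forall_2 dest: spec[of _ 1] spec[of _ 2])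

lemma mat2_mult:
  "mat2 a b c d ** mat2 a' b' c' d' = mat2 (a*a' + b*c') (a*b' + b*d') (c*a' + d*c') (c*b' + d*d')"
  by (simp add: mat2_def matrix_matrix_mult_def vec_eq_iff forall_2 sum_2)

lemma mat_eq_mat2: "(mat x :: complex^2^2) = mat2 x 0 0 x"
  by (simp add: mat_def mat2_def vec_eq_iff forall_2)

lemma scaleR_mat2:
  "r *\<^sub>R mat2 a b c d = mat2 (of_real r * a) (of_real r * b) (of_real r * c) (of_real r * d)"
  by (simp add: mat2_def vec_eq_iff forall_2 flip: scaleR_conv_of_real)

lemma add_mat2: "mat2 a b c d + mat2 a' b' c' d' = mat2 (a + a') (b + b') (c + c') (d + d')"
  by (simp add: mat2_def vec_eq_iff forall_2)

lemma uminus_mat2: "- mat2 a b c d = mat2 (- a) (- b) (- c) (- d)"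
  by (simp add: mat2_def vec_eq_iff forall_2)

lemma dot_sigma_eq_mat2:
  "dot_sigma v1 v2 v3 = mat2 (of_real v3) (of_real v1 - \<i> * of_real v2) (of_real v1 + \<i> * of_real v2) (- of_real v3)"
  by (simp add: dot_sigma_def sigma1_def sigma2_def sigma3_def scaleR_mat2 add_mat2 mat2_eq_iff)

definition quaternion_matrix :: "real \<Rightarrow> real \<Rightarrow> real \<Rightarrow> real \<Rightarrow> complex^2^2" where
  "quaternion_matrix a0 a1 a2 a3 = a0 *\<^sub>R mat 1 + mat \<i> ** dot_sigma a1 a2 a3"

lemma quaternion_matrix_eq_mat2:
  "quaternion_matrix a0 a1 a2 a3 =
     mat2 (of_real a0 + \<i> * of_real a3) (of_real a2 + \<i> * of_real a1)
          (- of_real a2 + \<i> * of_real a1) (of_real a0 - \<i> * of_real a3)"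
  by (simp add: quaternion_matrix_def dot_sigma_eq_mat2 mat_eq_mat2 mat2_mult scaleR_mat2 add_mat2 mat2_eq_iff
      algebra_simps)

text \<open>The vector part has \<open>- a \<times> b\<close>, not \<open>+ a \<times> b\<close>: the map is an anti-homomorphism
  from Hamilton's quaternions, since \<open>(i\<sigma>\<^sub>1)(i\<sigma>\<^sub>2) = -i\<sigma>\<^sub>3\<close>.\<close>

lemma quaternion_matrix_mult:
  "quaternion_matrix a0 a1 a2 a3 ** quaternion_matrix b0 b1 b2 b3 =
     quaternion_matrix (a0*b0 - a1*b1 - a2*b2 - a3*b3)
       (a0*b1 + b0*a1 - (a2*b3 - a3*b2)) (a0*b2 + b0*a2 - (a3*b1 - a1*b3)) (a0*b3 + b0*a3 - (a1*b2 - a2*b1))"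
  unfolding quaternion_matrix_eq_mat2 mat2_mult mat2_eq_iff
  by (simp add: algebra_simps)

lemma quaternion_matrix_linear:
  "quaternion_matrix a0 a1 a2 a3 = a0 *\<^sub>R quaternion_matrix 1 0 0 0 + a1 *\<^sub>R quaternion_matrix 0 1 0 0
     + a2 *\<^sub>R quaternion_matrix 0 0 1 0 + a3 *\<^sub>R quaternion_matrix 0 0 0 1"
  by (simp add: quaternion_matrix_eq_mat2 scaleR_mat2 add_mat2 mat2_eq_iff algebra_simps)

lemma has_vector_derivative_quaternion_matrix:
  assumes "(u0 has_real_derivative d0) (at t within S)" "(u1 has_real_derivative d1) (at t within S)"
    "(u2 has_real_derivative d2) (at t within S)" "(u3 has_real_derivative d3) (at t within S)"
  shows "((\<lambda>t. quaternion_matrix (u0 t) (u1 t) (u2 t) (u3 t)) has_vector_derivative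
           quaternion_matrix d0 d1 d2 d3) (at t within S)"
  using assms unfolding quaternion_matrix_linear[of "u0 _"] quaternion_matrix_linear[of d0]
    has_real_derivative_iff_has_vector_derivative
  by (intro has_vector_derivative_add bounded_linear.has_vector_derivative[OF bounded_linear_scaleR_left])

lemma quaternion_matrix_scalar: "quaternion_matrix r 0 0 0 = r *\<^sub>R mat 1"
  by (simp add: quaternion_matrix_def dot_sigma_def)

lemma quaternion_matrix_conj_mult:
  "quaternion_matrix a0 (- a1) (- a2) (- a3) ** quaternion_matrix a0 a1 a2 a3 = (a0\<^sup>2 + a1\<^sup>2 + a2\<^sup>2 + a3\<^sup>2) *\<^sub>R mat 1"
  "quaternion_matrix a0 a1 a2 a3 ** quaternion_matrix a0 (- a1) (- a2) (- a3) = (a0\<^sup>2 + a1\<^sup>2 + a2\<^sup>2 + a3\<^sup>2) *\<^sub>R mat 1"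
  by (simp_all add: quaternion_matrix_mult quaternion_matrix_scalar power2_eq_square)

lemma minus_i_ham:
  "mat (- \<i>) ** ham b0 b1 b2 b3 t = - (mat (\<i> * of_real (b0 t)) + quaternion_matrix 0 (b1 t) (b2 t) (b3 t))"
  unfolding ham_def quaternion_matrix_eq_mat2 dot_sigma_eq_mat2 mat_eq_mat2 scaleR_mat2 add_mat2 mat2_mult
    uminus_mat2 mat2_eq_iff
  by (simp add: algebra_simps)

locale pauli_quaternion_flow =
  fixes b1 b2 b3 u0 u1 u2 u3 :: "real \<Rightarrow> real" and S :: "real set"
  assumes convex_S: "convex S"
    and q_ode: "\<And>t. t \<in> S \<Longrightarrow>
        (u0 has_real_derivative (b1 t * u1 t + b2 t * u2 t + b3 t * u3 t)) (at t within S) \<and>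
        (u1 has_real_derivative (- b1 t * u0 t - b3 t * u2 t + b2 t * u3 t)) (at t within S) \<and>
        (u2 has_real_derivative (- b2 t * u0 t + b3 t * u1 t - b1 t * u3 t)) (at t within S) \<and>
        (u3 has_real_derivative (- b3 t * u0 t - b2 t * u1 t + b1 t * u2 t)) (at t within S)"
begin

definition rotor :: "real \<Rightarrow> complex^2^2" where
  "rotor t = quaternion_matrix (u0 t) (u1 t) (u2 t) (u3 t)"

definition rotor_conj :: "real \<Rightarrow> complex^2^2" where
  "rotor_conj t = quaternion_matrix (u0 t) (- u1 t) (- u2 t) (- u3 t)"

definition generator :: "real \<Rightarrow> complex^2^2" where
  "generator t = quaternion_matrix 0 (b1 t) (b2 t) (b3 t)"

lemma rotor_has_vector_derivative:
  assumes "t \<in> S"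
  shows "(rotor has_vector_derivative - generator t ** rotor t) (at t within S)"
proof -
  from q_ode[OF assms] have "(rotor has_vector_derivative quaternion_matrix
      (b1 t * u1 t + b2 t * u2 t + b3 t * u3 t) (- b1 t * u0 t - b3 t * u2 t + b2 t * u3 t)
      (- b2 t * u0 t + b3 t * u1 t - b1 t * u3 t) (- b3 t * u0 t - b2 t * u1 t + b1 t * u2 t))
      (at t within S)"
    unfolding rotor_def by (blast intro: has_vector_derivative_quaternion_matrix)
  then show ?thesis
    by (rule has_vector_derivative_eq_rhs)
      (simp add: generator_def rotor_def quaternion_matrix_eq_mat2 mat2_mult uminus_mat2 mat2_eq_iff
        algebra_simps)
qed

lemma rotor_conj_has_vector_derivative:
  assumes "t \<in> S"
  shows "(rotor_conj has_vector_derivative rotor_conj t ** generator t) (at t within S)"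
proof -
  from q_ode[OF assms] have "(rotor_conj has_vector_derivative quaternion_matrix
      (b1 t * u1 t + b2 t * u2 t + b3 t * u3 t) (- (- b1 t * u0 t - b3 t * u2 t + b2 t * u3 t))
      (- (- b2 t * u0 t + b3 t * u1 t - b1 t * u3 t)) (- (- b3 t * u0 t - b2 t * u1 t + b1 t * u2 t)))
      (at t within S)"
    unfolding rotor_conj_def by (elim conjE) (intro has_vector_derivative_quaternion_matrix DERIV_minus)
  then show ?thesis
    by (rule has_vector_derivative_eq_rhs)
      (simp add: generator_def rotor_conj_def quaternion_matrix_eq_mat2 mat2_mult mat2_eq_iff algebra_simps)
qed

lemma rotor_conj_mult_rotor:
  "rotor_conj t ** rotor t = ((u0 t)\<^sup>2 + (u1 t)\<^sup>2 + (u2 t)\<^sup>2 + (u3 t)\<^sup>2) *\<^sub>R mat 1"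
  "rotor t ** rotor_conj t = ((u0 t)\<^sup>2 + (u1 t)\<^sup>2 + (u2 t)\<^sup>2 + (u3 t)\<^sup>2) *\<^sub>R mat 1"
  by (simp_all add: rotor_def rotor_conj_def quaternion_matrix_conj_mult)

lemma sum_squares_constant:
  assumes "s \<in> S" "t \<in> S"
  shows "(u0 t)\<^sup>2 + (u1 t)\<^sup>2 + (u2 t)\<^sup>2 + (u3 t)\<^sup>2 = (u0 s)\<^sup>2 + (u1 s)\<^sup>2 + (u2 s)\<^sup>2 + (u3 s)\<^sup>2"
proof -
  have "rotor_conj t ** rotor t = rotor_conj s ** rotor s"
    using assms rotor_has_vector_derivative rotor_conj_has_vector_derivative
    by (intro matrix_mult_constant_on[where S=S and A="\<lambda>t. - generator t"])
      (auto simp: convex_S matrix_mult_minus_right)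
  then have "(rotor_conj t ** rotor t) $ 1 $ 1 = (rotor_conj s ** rotor s) $ 1 $ 1"
    by simp
  then show ?thesis
    by (simp add: rotor_conj_mult_rotor mat_def)
qed

lemma phase_rotor_conj_mult_constant:
  fixes b0 \<theta> :: "real \<Rightarrow> real" and U :: "real \<Rightarrow> complex^2^2"
  assumes \<theta>: "\<And>t. t \<in> S \<Longrightarrow> (\<theta> has_real_derivative b0 t) (at t within S)"
    and U: "\<And>t. t \<in> S \<Longrightarrow>
        (U has_vector_derivative (mat (- \<i>) ** (ham b0 b1 b2 b3 t ** U t))) (at t within S)"
    and "s \<in> S" "t \<in> S"
  shows "mat (cis (\<theta> t)) ** rotor_conj t ** U t = mat (cis (\<theta> s)) ** rotor_conj s ** U s"
proof -
  define P where "P t = mat (cis (\<theta> t)) ** rotor_conj t" for t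
  have "(P has_vector_derivative - (P t ** (mat (- \<i>) ** ham b0 b1 b2 b3 t))) (at t within S)"
    if "t \<in> S" for t
  proof -
    have "- (P t ** (mat (- \<i>) ** ham b0 b1 b2 b3 t)) = P t ** mat (\<i> * of_real (b0 t)) + P t ** generator t"
      using minus_i_ham[of b0 b1 b2 b3 t]
      by (simp only: generator_def matrix_mult_minus_right minus_minus matrix_add_ldistrib)
    also have "\<dots> = mat (cis (\<theta> t)) ** (rotor_conj t ** generator t)
        + mat (\<i> * of_real (b0 t) * cis (\<theta> t)) ** rotor_conj t"
      unfolding P_def
      by (simp only: matrix_mul_assoc[symmetric] mat_mult_commute[of _ "rotor_conj t", symmetric] add.commute)
        (simp only: matrix_mul_assoc mat_mult_mat mult.commute)
    finally show ?thesis
      unfolding P_def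
      using bounded_bilinear.has_vector_derivative[OF bounded_bilinear_matrix_matrix_mult
          bounded_linear.has_vector_derivative[OF bounded_linear_mat has_vector_derivative_cis[OF \<theta>[OF that]]]
          rotor_conj_has_vector_derivative[OF that]]
      by simp
  qed
  then have "P t ** U t = P s ** U s"
    using assms U
    by (intro matrix_mult_constant_on[where S=S and A="\<lambda>t. mat (- \<i>) ** ham b0 b1 b2 b3 t"])
      (auto simp: convex_S matrix_mul_assoc)
  then show ?thesis
    by (simp add: P_def)
qed

lemma propagator_eq:
  fixes b0 \<theta> :: "real \<Rightarrow> real" and U :: "real \<Rightarrow> complex^2^2"
  assumes \<theta>: "\<And>t. t \<in> S \<Longrightarrow> (\<theta> has_real_derivative b0 t) (at t within S)"
    and U: "\<And>t. t \<in> S \<Longrightarrow>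
        (U has_vector_derivative (mat (- \<i>) ** (ham b0 b1 b2 b3 t ** U t))) (at t within S)"
    and "t0 \<in> S" "t \<in> S"
    and init: "\<theta> t0 = 0" "U t0 = mat 1" "u0 t0 = 1" "u1 t0 = 0" "u2 t0 = 0" "u3 t0 = 0"
  shows "U t = mat (cis (- \<theta> t)) ** rotor t"
proof -
  have "mat (cis (\<theta> t)) ** rotor_conj t ** U t = mat 1"
    using phase_rotor_conj_mult_constant[OF \<theta> U \<open>t0 \<in> S\<close> \<open>t \<in> S\<close>]
    by (simp add: init rotor_conj_def quaternion_matrix_scalar)
  moreover have "mat (cis (- \<theta> t)) ** rotor t ** (mat (cis (\<theta> t)) ** rotor_conj t) = mat 1"
  proof -
    have "mat (cis (- \<theta> t)) ** rotor t ** (mat (cis (\<theta> t)) ** rotor_conj t)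
        = mat (cis (- \<theta> t) * cis (\<theta> t)) ** (rotor t ** rotor_conj t)"
      by (simp only: matrix_mul_assoc mat_mult_mat mult.commute
          mat_mult_commute[of "cis (\<theta> t)" "mat (cis (- \<theta> t)) ** rotor t", symmetric])
    then show ?thesis
      using sum_squares_constant[OF \<open>t0 \<in> S\<close> \<open>t \<in> S\<close>]
      by (simp add: cis_mult rotor_conj_mult_rotor init)
  qed
  ultimately show ?thesis
    by (metis matrix_mul_assoc matrix_mul_lid matrix_mul_rid)
qed

end

theorem theorem2:
  fixes b0 b1 b2 b3 u0 u1 u2 u3 :: "real \<Rightarrow> real"
    and t0 T :: real
    and U :: "real \<Rightarrow> complex^2^2"
  assumes cont: "continuous_on {t0..T} b0" "continuous_on {t0..T} b1"
      "continuous_on {t0..T} b2" "continuous_on {t0..T} b3"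
    and q_init: "u0 t0 = 1" "u1 t0 = 0" "u2 t0 = 0" "u3 t0 = 0"
    and q_ode: "\<And>t. t \<in> {t0..T} \<Longrightarrow>
        (u0 has_real_derivative (b1 t * u1 t + b2 t * u2 t + b3 t * u3 t)) (at t within {t0..T}) \<and>
        (u1 has_real_derivative (- b1 t * u0 t - b3 t * u2 t + b2 t * u3 t)) (at t within {t0..T}) \<and>
        (u2 has_real_derivative (- b2 t * u0 t + b3 t * u1 t - b1 t * u3 t)) (at t within {t0..T}) \<and>
        (u3 has_real_derivative (- b3 t * u0 t - b2 t * u1 t + b1 t * u2 t)) (at t within {t0..T})"
    and U_init: "U t0 = mat 1"
    and U_ode: "\<And>t. t \<in> {t0..T} \<Longrightarrow>
        (U has_vector_derivative (mat (- \<i>) ** (ham b0 b1 b2 b3 t ** U t))) (at t within {t0..T})"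
  shows "\<forall>t\<in>{t0..T}. (u0 t)\<^sup>2 + (u1 t)\<^sup>2 + (u2 t)\<^sup>2 + (u3 t)\<^sup>2 = 1 \<and>
           U t = mat (exp (- \<i> * complex_of_real (integral {t0..t} b0)))
                 ** (u0 t *\<^sub>R mat 1 + mat \<i> ** dot_sigma (u1 t) (u2 t) (u3 t))"
proof -
  interpret pauli_quaternion_flow b1 b2 b3 u0 u1 u2 u3 "{t0..T}"
    using q_ode by unfold_locales simp_all
  have \<theta>: "((\<lambda>t. integral {t0..t} b0) has_real_derivative b0 t) (at t within {t0..T})"
    if "t \<in> {t0..T}" for t
    unfolding has_real_derivative_iff_has_vector_derivative
    by (rule integral_has_vector_derivative[OF cont(1) that])
  show ?thesis
  proof
    fix t assume t: "t \<in> {t0..T}"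
    then have t0: "t0 \<in> {t0..T}" by simp
    have "(u0 t)\<^sup>2 + (u1 t)\<^sup>2 + (u2 t)\<^sup>2 + (u3 t)\<^sup>2 = 1"
      using sum_squares_constant[OF t0 t] by (simp add: q_init)
    moreover have "U t = mat (cis (- integral {t0..t} b0)) ** rotor t"
      using propagator_eq[OF \<theta> U_ode t0 t] by (simp add: q_init U_init)
    ultimately show "(u0 t)\<^sup>2 + (u1 t)\<^sup>2 + (u2 t)\<^sup>2 + (u3 t)\<^sup>2 = 1 \<and>
        U t = mat (exp (- \<i> * complex_of_real (integral {t0..t} b0)))
          ** (u0 t *\<^sub>R mat 1 + mat \<i> ** dot_sigma (u1 t) (u2 t) (u3 t))"
      by (simp add: cis_conv_exp rotor_def quaternion_matrix_def)
  qed
qed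

end
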